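(* Let $0<\mu<1$, $\bar\mu=1-\mu$, $\boldsymbol\mu=(\bar\mu,\mu)'$, and let $\lambda\in(-1,1)$ be such that the matrix $M(\lambda,\boldsymbol\mu)=\lambda I+(1-\lambda)\mathbf 1\boldsymbol\mu'$ has nonnegative entries. Let $(Y_k)$ be the Markov chain on $\{0,1\}$ with transition matrix $M(\lambda,\boldsymbol\mu)$ started from its stationary distribution $\boldsymbol\mu$ (so $\mathbb{P}(Y_k=1)=\mu$), and let $S_n=\sum_{k=1}^nY_k$. Let $D_t=\mathrm{diag}(1,e^{t/2})$, $\gamma_1=(\sqrt{\bar\mu},\sqrt{\mu})'$, $G_t=D_t[\gamma_1\gamma_1'+\lambda(I-\gamma_1\gamma_1')]D_t$, and let $\theta(t)$ be the largest eigenvalue of $G_t$. Then for all $\varepsilon>0$ with $\mu+\varepsilon<1$, all $n\ge1$ and all $t\ge0$, $$\mathbb{P}_{\boldsymbol\mu}[S_n\ge n(\mu+\varepsilon)]\le\|D_t\gamma_1\|^2\,\theta(t)^{-1}\exp\{-n[t(\mu+\varepsilon)-\log\theta(t)]\}.$$ If moreover $0\le\lambda<1$, then $$\mathbb{P}_{\boldsymbol\mu}[S_n\ge n(\mu+\varepsilon)]\le\left[\frac{\mu+\bar\mu\lambda}{1-2(\bar\mu-\varepsilon)/(\sqrt\Delta+1)}\right]^{n(\mu+\varepsilon)}\left[\frac{\bar\mu+\mu\lambda}{1-2(\mu+\varepsilon)/(\sqrt\Delta+1)}\right]^{n(\bar\mu-\varepsilon)}\le\exp\Big[-2\,\frac{1-\lambda}{1+\lambda}\,n\varepsilon^2\Big],$$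 where $\Delta=1+\dfrac{4\lambda(\mu+\varepsilon)(\bar\mu-\varepsilon)}{\mu\bar\mu(1-\lambda)^2}$.
   Context: $I$ is the $2\times2$ identity matrix and $\mathbf 1=(1,1)'$; states are ordered $(0,1)$. $M(\lambda,\boldsymbol\mu)$ is the transition matrix of the two-state chain with stationary distribution $\boldsymbol\mu$ and second eigenvalue $\lambda$. $\|\cdot\|$ is the Euclidean norm. *)

theory Defs
  imports "HOL-Analysis.Analysis"
begin

text \<open>States are ordered (0,1): state 0 corresponds to index 1 and state 1 to index 2
  of vectors/matrices of type real^2 and real^2^2.\<close>

definition st_idx :: "nat \<Rightarrow> 2" where
  "st_idx a = (if a = 0 then 1 else 2)"

definition mu_vec :: "real \<Rightarrow> real^2" where
  "mu_vec \<mu> = vector [1 - \<mu>, \<mu>]"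

definition Mmat :: "real \<Rightarrow> real \<Rightarrow> real^2^2" where
  "Mmat lam \<mu> = lam *\<^sub>R mat 1 + (1 - lam) *\<^sub>R (\<chi> i j. mu_vec \<mu> $ j)"

fun path_prob :: "real \<Rightarrow> real \<Rightarrow> nat list \<Rightarrow> real" where
  "path_prob lam \<mu> [] = 1"
| "path_prob lam \<mu> (y # ys) =
     mu_vec \<mu> $ st_idx y *
     (\<Prod>k < length ys. Mmat lam \<mu> $ st_idx ((y # ys) ! k) $ st_idx ((y # ys) ! Suc k))"

definition prob_Sn_ge :: "real \<Rightarrow> real \<Rightarrow> nat \<Rightarrow> real \<Rightarrow> real" where
  "prob_Sn_ge lam \<mu> n c =
     (\<Sum>ys \<in> {ys. length ys = n \<and> set ys \<subseteq> {0, 1} \<and> real (sum_list ys) \<ge> c}.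
        path_prob lam \<mu> ys)"

definition Dmat :: "real \<Rightarrow> real^2^2" where
  "Dmat t = (\<chi> i j. if i = j then (if i = 1 then 1 else exp (t / 2)) else 0)"

definition gamma1 :: "real \<Rightarrow> real^2" where
  "gamma1 \<mu> = vector [sqrt (1 - \<mu>), sqrt \<mu>]"

definition Gmat :: "real \<Rightarrow> real \<Rightarrow> real \<Rightarrow> real^2^2" where
  "Gmat lam \<mu> t =
     (let P = (\<chi> i j. gamma1 \<mu> $ i * gamma1 \<mu> $ j)
      in Dmat t ** (P + lam *\<^sub>R (mat 1 - P)) ** Dmat t)"

definition largest_eigenvalue :: "real^2^2 \<Rightarrow> real" where
  "largest_eigenvalue A = Max {x. \<exists>v. v \<noteq> 0 \<and> A *v v = x *\<^sub>R v}"

definition theta :: "real \<Rightarrow> real \<Rightarrow> real \<Rightarrow> real" where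
  "theta lam \<mu> t = largest_eigenvalue (Gmat lam \<mu> t)"

end

(* Write p = 1 - mu + lam mu and q = mu + lam (1 - mu) for the diagonal of M.  Conjugating the
   tilted kernel M diag(1, e^t) by D_t Pi^(1/2) gives the symmetric matrix G_t, hence
   E[exp (t S_n)] = <D_t gamma_1, G_t^(n-1) D_t gamma_1> <= |D_t gamma_1|^2 theta(t)^(n-1),
   because theta(t), the larger root of z^2 - (p + q e^t) z + lam e^t, is the operator norm of
   G_t (its trace is nonnegative).  Markov's inequality gives the first bound.
   For lam >= 0 also |D_t gamma_1|^2 <= theta(t), so the probability is at most
   (theta(t) e^(-t a))^n with a = mu + eps.  The base alpha^a beta^(1-a) of the explicit bound is
   the minimum of theta(t) e^(-t a): at t* = ln (beta / alpha) >= 0 the larger root is beta, and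
   for every t the weighted AM-GM inequality gives alpha^a beta^(1-a) e^(t a) <= theta(t).
   Taking t = 4 eps (1 - lam) / (1 + lam) there and bounding theta(t) by Hoeffding's lemma for a
   two-point law and convexity of exp yields exp (-2 n eps^2 (1 - lam) / (1 + lam)). *)

theory Submission
  imports Defs "HOL-Probability.Hoeffding"
begin

section \<open>Symmetric 2 by 2 matrices\<close>

definition larger_root :: "real \<Rightarrow> real \<Rightarrow> real" where
  "larger_root S P = (S + sqrt (S\<^sup>2 - 4 * P)) / 2"

lemma larger_root_root:
  assumes "4 * P \<le> S\<^sup>2"
  shows "(larger_root S P)\<^sup>2 - S * larger_root S P + P = 0"
proof -
  have "(sqrt (S\<^sup>2 - 4 * P))\<^sup>2 = S\<^sup>2 - 4 * P" using assms by simp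
  then show ?thesis unfolding larger_root_def by (simp add: field_simps power2_eq_square)
qed

lemma larger_root_ge:
  assumes "c\<^sup>2 - S * c + P \<le> 0"
  shows "c \<le> larger_root S P"
proof -
  have "(2 * c - S)\<^sup>2 \<le> S\<^sup>2 - 4 * P" using assms by (simp add: power2_eq_square algebra_simps)
  then have "2 * c - S \<le> sqrt (S\<^sup>2 - 4 * P)" by (simp add: real_le_rsqrt)
  then show ?thesis unfolding larger_root_def by simp
qed

lemma larger_root_le:
  assumes "0 \<le> w\<^sup>2 - S * w + P" and "S \<le> 2 * w"
  shows "larger_root S P \<le> w"
proof -
  have "S\<^sup>2 - 4 * P \<le> (2 * w - S)\<^sup>2" using assms(1) by (simp add: power2_eq_square algebra_simps)
  then have "sqrt (S\<^sup>2 - 4 * P) \<le> sqrt ((2 * w - S)\<^sup>2)" by (rule real_sqrt_le_mono)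
  then have "sqrt (S\<^sup>2 - 4 * P) \<le> 2 * w - S" using assms(2) by simp
  then show ?thesis unfolding larger_root_def by simp
qed

lemma larger_root_ge_half:
  assumes "4 * P \<le> S\<^sup>2"
  shows "S / 2 \<le> larger_root S P"
  using assms unfolding larger_root_def by simp

lemma matrix_vector_mult_2:
  fixes A :: "real^2^2"
  shows "(A *v v) $ 1 = A$1$1 * v$1 + A$1$2 * v$2" and "(A *v v) $ 2 = A$2$1 * v$1 + A$2$2 * v$2"
  by (simp_all add: matrix_vector_mult_def sum_2)

lemma norm_vec2_squared: "(norm (v :: real^2))\<^sup>2 = (v$1)\<^sup>2 + (v$2)\<^sup>2"
  by (simp add: power2_norm_eq_inner inner_vec_def sum_2 power2_eq_square[symmetric])

lemma sym2_discriminant: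
  fixes a b g :: real
  shows "(a + b)\<^sup>2 - 4 * (a * b - g\<^sup>2) = (a - b)\<^sup>2 + 4 * g\<^sup>2"
  by (simp add: power2_eq_square algebra_simps)

lemma sym2_eigenvalue_char:
  fixes A :: "real^2^2"
  assumes "A$1$1 = a" "A$1$2 = g" "A$2$1 = g" "A$2$2 = b" and "v \<noteq> 0" "A *v v = x *\<^sub>R v"
  shows "x\<^sup>2 - (a + b) * x + (a * b - g\<^sup>2) = 0"
proof -
  have "(a - x) * v$1 + g * v$2 = 0" "g * v$1 + (b - x) * v$2 = 0"
    using assms(6) assms(1-4) unfolding vec_eq_iff forall_2 matrix_vector_mult_2
    by (simp_all add: algebra_simps)
  then have "(x\<^sup>2 - (a + b) * x + (a * b - g\<^sup>2)) * v$1 = 0"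
      and "(x\<^sup>2 - (a + b) * x + (a * b - g\<^sup>2)) * v$2 = 0"
    by (simp_all add: power2_eq_square algebra_simps) algebra+
  moreover have "v$1 \<noteq> 0 \<or> v$2 \<noteq> 0" using assms(5) by (auto simp: vec_eq_iff forall_2)
  ultimately show ?thesis by auto
qed

lemma sym2_has_eigenvalue:
  fixes A :: "real^2^2"
  assumes "A$1$1 = a" "A$1$2 = g" "A$2$1 = g" "A$2$2 = b" and "(a - T) * (b - T) = g\<^sup>2"
  shows "\<exists>v. v \<noteq> 0 \<and> A *v v = T *\<^sub>R v"
proof (cases "g = 0 \<and> T = a")
  case True
  then have "A *v vector [1, 0] = T *\<^sub>R vector [1, 0]"
    using assms by (simp add: vec_eq_iff forall_2 matrix_vector_mult_2)
  moreover have "vector [1, 0] \<noteq> (0 :: real^2)" by (auto simp: vec_eq_iff forall_2)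
  ultimately show ?thesis by blast
next
  case False
  then have "vector [g, T - a] \<noteq> (0 :: real^2)" by (auto simp: vec_eq_iff forall_2)
  moreover have "A *v vector [g, T - a] = T *\<^sub>R vector [g, T - a]"
    using assms by (simp add: vec_eq_iff forall_2 matrix_vector_mult_2 algebra_simps power2_eq_square)
  ultimately show ?thesis by blast
qed

lemma largest_eigenvalue_sym2:
  fixes A :: "real^2^2"
  assumes "A$1$1 = a" "A$1$2 = g" "A$2$1 = g" "A$2$2 = b"
  shows "largest_eigenvalue A = larger_root (a + b) (a * b - g\<^sup>2)"
proof -
  define T where "T = larger_root (a + b) (a * b - g\<^sup>2)"
  let ?E = "{x. \<exists>v. v \<noteq> 0 \<and> A *v v = x *\<^sub>R v}"
  have "4 * (a * b - g\<^sup>2) \<le> (a + b)\<^sup>2"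
    using sym2_discriminant[of a b g] zero_le_power2[of "a - b"] zero_le_power2[of g] by linarith
  then have T: "T\<^sup>2 - (a + b) * T + (a * b - g\<^sup>2) = 0"
    unfolding T_def by (rule larger_root_root)
  have char: "x\<^sup>2 - (a + b) * x + (a * b - g\<^sup>2) = 0" if "x \<in> ?E" for x
    using that sym2_eigenvalue_char[OF assms] by blast
  have "T \<in> ?E"
    using sym2_has_eigenvalue[OF assms] T by (simp add: power2_eq_square algebra_simps)
  moreover have "x \<le> T" if "x \<in> ?E" for x
    unfolding T_def by (rule larger_root_ge) (simp add: char[OF that])
  moreover have "?E \<subseteq> {T, a + b - T}"
  proof
    fix x assume "x \<in> ?E"
    have "(x - T) * (x - (a + b - T))
        = (x\<^sup>2 - (a + b) * x + (a * b - g\<^sup>2)) - (T\<^sup>2 - (a + b) * T + (a * b - g\<^sup>2))"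
      by (simp add: power2_eq_square algebra_simps)
    then have "(x - T) * (x - (a + b - T)) = 0" using char[OF \<open>x \<in> ?E\<close>] T by simp
    then show "x \<in> {T, a + b - T}" by auto
  qed
  then have "finite ?E" by (rule finite_subset) simp
  ultimately show ?thesis
    unfolding largest_eigenvalue_def T_def[symmetric] by (intro Max_eqI) auto
qed

lemma norm_sym2_mult_le:
  fixes A :: "real^2^2"
  assumes "A$1$1 = a" "A$1$2 = g" "A$2$1 = g" "A$2$2 = b" and "0 \<le> a + b" "0 \<le> g"
  shows "norm (A *v v) \<le> largest_eigenvalue A * norm v"
proof -
  define T where "T = larger_root (a + b) (a * b - g\<^sup>2)"
  have disc: "4 * (a * b - g\<^sup>2) \<le> (a + b)\<^sup>2"
    using sym2_discriminant[of a b g] zero_le_power2[of "a - b"] zero_le_power2[of g] by linarith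
  have "\<bar>a - b\<bar> \<le> sqrt ((a - b)\<^sup>2 + 4 * g\<^sup>2)"
    using real_sqrt_le_mono[of "(a - b)\<^sup>2" "(a - b)\<^sup>2 + 4 * g\<^sup>2"] by simp
  then have Ta: "0 \<le> T - a" and Tb: "0 \<le> T - b" and T0: "0 \<le> T"
    using assms(5) unfolding T_def larger_root_def sym2_discriminant by (auto simp: abs_le_iff)
  have "T\<^sup>2 - (a + b) * T + (a * b - g\<^sup>2) = 0"
    unfolding T_def using disc by (rule larger_root_root)
  then have root: "(T - a) * (T - b) = g\<^sup>2" by (simp add: power2_eq_square algebra_simps)
  define \<alpha> \<beta> where "\<alpha> = sqrt (T - a)" and "\<beta> = sqrt (T - b)"
  have a: "a = T - \<alpha>\<^sup>2" and b: "b = T - \<beta>\<^sup>2" using Ta Tb unfolding \<alpha>_def \<beta>_def by simp_all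
  have g: "g = \<alpha> * \<beta>"
    using root assms(6) unfolding \<alpha>_def \<beta>_def by (simp add: real_sqrt_mult[symmetric])
  have "T\<^sup>2 * ((v$1)\<^sup>2 + (v$2)\<^sup>2) - ((a * v$1 + g * v$2)\<^sup>2 + (g * v$1 + b * v$2)\<^sup>2)
      = (a + b) * (\<alpha> * v$1 - \<beta> * v$2)\<^sup>2"
    unfolding a b g by (simp add: power2_eq_square algebra_simps)
  also have "\<dots> \<ge> 0" using assms(5) by simp
  moreover have "(norm (A *v v))\<^sup>2 = (a * v$1 + g * v$2)\<^sup>2 + (g * v$1 + b * v$2)\<^sup>2"
    using assms(1-4) unfolding norm_vec2_squared matrix_vector_mult_2 by simp
  moreover have "(T * norm v)\<^sup>2 = T\<^sup>2 * ((v$1)\<^sup>2 + (v$2)\<^sup>2)"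
    by (simp add: power_mult_distrib norm_vec2_squared)
  ultimately have "(norm (A *v v))\<^sup>2 \<le> (T * norm v)\<^sup>2" by linarith
  then have "norm (A *v v) \<le> T * norm v" by (rule power2_le_imp_le) (simp add: T0)
  then show ?thesis using largest_eigenvalue_sym2[OF assms(1-4)] unfolding T_def by simp
qed

section \<open>The largest eigenvalue theta\<close>

lemma Mmat_diag:
  "Mmat lam \<mu> $ st_idx 0 $ st_idx 0 = 1 - \<mu> + lam * \<mu>"
  "Mmat lam \<mu> $ st_idx 1 $ st_idx 1 = \<mu> + lam * (1 - \<mu>)"
  by (simp_all add: Mmat_def st_idx_def mu_vec_def mat_def algebra_simps)

lemma exp_half_squared: "(exp ((t :: real) / 2))\<^sup>2 = exp t"
  by (simp add: power2_eq_square flip: exp_add)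

lemma Gmat_entries:
  assumes "0 \<le> \<mu>" "\<mu> \<le> 1"
  shows "Gmat lam \<mu> t $1$1 = 1 - \<mu> + lam * \<mu>"
    and "Gmat lam \<mu> t $1$2 = (1 - lam) * sqrt (1 - \<mu>) * sqrt \<mu> * exp (t / 2)"
    and "Gmat lam \<mu> t $2$1 = (1 - lam) * sqrt (1 - \<mu>) * sqrt \<mu> * exp (t / 2)"
    and "Gmat lam \<mu> t $2$2 = (\<mu> + lam * (1 - \<mu>)) * exp t"
proof -
  have "exp (t / 2) * exp (t / 2) = exp t" by (simp flip: exp_add)
  then show "Gmat lam \<mu> t $1$1 = 1 - \<mu> + lam * \<mu>"
    "Gmat lam \<mu> t $1$2 = (1 - lam) * sqrt (1 - \<mu>) * sqrt \<mu> * exp (t / 2)"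
    "Gmat lam \<mu> t $2$1 = (1 - lam) * sqrt (1 - \<mu>) * sqrt \<mu> * exp (t / 2)"
    "Gmat lam \<mu> t $2$2 = (\<mu> + lam * (1 - \<mu>)) * exp t"
    using assms
    by (simp_all add: Gmat_def Dmat_def gamma1_def matrix_matrix_mult_def sum_2 mat_def algebra_simps)
qed

lemma diag_product_minus_lam:
  fixes lam \<mu> :: real
  shows "(1 - \<mu> + lam * \<mu>) * (\<mu> + lam * (1 - \<mu>)) - lam = (1 - lam)\<^sup>2 * \<mu> * (1 - \<mu>)"
  unfolding power2_eq_square by algebra

lemma theta_eq_larger_root:
  assumes "0 \<le> \<mu>" "\<mu> \<le> 1"
  shows "theta lam \<mu> t
    = larger_root (1 - \<mu> + lam * \<mu> + (\<mu> + lam * (1 - \<mu>)) * exp t) (lam * exp t)"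
proof -
  define p q g where "p = 1 - \<mu> + lam * \<mu>" and "q = \<mu> + lam * (1 - \<mu>)"
    and "g = (1 - lam) * sqrt (1 - \<mu>) * sqrt \<mu> * exp (t / 2)"
  have "g\<^sup>2 = (1 - lam)\<^sup>2 * (sqrt (1 - \<mu>))\<^sup>2 * (sqrt \<mu>)\<^sup>2 * (exp (t / 2))\<^sup>2"
    unfolding g_def by (simp add: power_mult_distrib)
  also have "\<dots> = (1 - lam)\<^sup>2 * \<mu> * (1 - \<mu>) * exp t"
    using assms by (simp add: exp_half_squared)
  finally have "p * (q * exp t) - g\<^sup>2 = (p * q - (1 - lam)\<^sup>2 * \<mu> * (1 - \<mu>)) * exp t"
    by (simp add: algebra_simps)
  also have "\<dots> = lam * exp t"
    using diag_product_minus_lam[of \<mu> lam] unfolding p_def q_def by simp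
  finally show ?thesis
    unfolding theta_def largest_eigenvalue_sym2[OF Gmat_entries[OF assms]]
    unfolding p_def q_def g_def by simp
qed

lemma theta_pos:
  assumes "0 \<le> \<mu>" "\<mu> \<le> 1" "-1 < lam" and "0 \<le> \<mu> + lam * (1 - \<mu>)" and "0 \<le> t"
  shows "0 < theta lam \<mu> t"
proof -
  define p q where "p = 1 - \<mu> + lam * \<mu>" and "q = \<mu> + lam * (1 - \<mu>)"
  have "(p + q * exp t)\<^sup>2 - 4 * (lam * exp t) = (p - q * exp t)\<^sup>2 + 4 * ((1 - lam)\<^sup>2 * \<mu> * (1 - \<mu>)) * exp t"
    unfolding p_def q_def diag_product_minus_lam[symmetric] by (simp add: power2_eq_square algebra_simps)
  also have "\<dots> \<ge> 0" using assms(1,2) by simp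
  finally have half_trace: "(p + q * exp t) / 2 \<le> theta lam \<mu> t"
    unfolding theta_eq_larger_root[OF assms(1,2)] p_def[symmetric] q_def[symmetric]
    by (intro larger_root_ge_half) simp
  moreover have "q \<le> q * exp t"
    using mult_left_mono[of 1 "exp t" q] assms(4,5) unfolding q_def by simp
  moreover have "p + q = 1 + lam" unfolding p_def q_def by (simp add: algebra_simps)
  ultimately have "0 < (p + q * exp t) / 2" using assms(3) by (simp add: field_simps)
  then show ?thesis using half_trace by (rule less_le_trans)
qed

lemma Dmat_gamma1: "Dmat t *v gamma1 \<mu> = vector [sqrt (1 - \<mu>), exp (t / 2) * sqrt \<mu>]"
  by (simp add: vec_eq_iff forall_2 matrix_vector_mult_2 Dmat_def gamma1_def)

lemma norm_Dmat_gamma1: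
  assumes "0 \<le> \<mu>" "\<mu> \<le> 1"
  shows "(norm (Dmat t *v gamma1 \<mu>))\<^sup>2 = 1 - \<mu> + \<mu> * exp t"
  using assms unfolding norm_vec2_squared Dmat_gamma1
  by (simp add: power_mult_distrib exp_half_squared)

section \<open>Exponential moments of the chain\<close>

fun trans_prob :: "real \<Rightarrow> real \<Rightarrow> nat \<Rightarrow> nat list \<Rightarrow> real" where
  "trans_prob lam \<mu> y [] = 1"
| "trans_prob lam \<mu> y (z # zs) = Mmat lam \<mu> $ st_idx y $ st_idx z * trans_prob lam \<mu> z zs"

lemma path_prob_Cons:
  "path_prob lam \<mu> (y # ys) = mu_vec \<mu> $ st_idx y * trans_prob lam \<mu> y ys"
proof -
  have "(\<Prod>k < length ys. Mmat lam \<mu> $ st_idx ((y # ys) ! k) $ st_idx ((y # ys) ! Suc k))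
      = trans_prob lam \<mu> y ys"
  proof (induction ys arbitrary: y)
    case (Cons z zs)
    then show ?case by (simp only: length_Cons prod.lessThan_Suc_shift nth_Cons_Suc nth_Cons_0) simp
  qed simp
  then show ?thesis by simp
qed

lemma trans_prob_nonneg:
  assumes "\<forall>i j. 0 \<le> Mmat lam \<mu> $ i $ j"
  shows "0 \<le> trans_prob lam \<mu> y ys"
  using assms by (induction ys arbitrary: y) simp_all

lemma path_prob_nonneg:
  assumes "\<forall>i j. 0 \<le> Mmat lam \<mu> $ i $ j" and "0 \<le> \<mu>" "\<mu> \<le> 1"
  shows "0 \<le> path_prob lam \<mu> ys"
proof (cases ys)
  case (Cons y zs)
  have "0 \<le> mu_vec \<mu> $ st_idx y" using assms(2,3) by (simp add: st_idx_def mu_vec_def)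
  then show ?thesis
    unfolding Cons path_prob_Cons using trans_prob_nonneg[OF assms(1)] by simp
qed simp

definition binary_lists :: "nat \<Rightarrow> nat list set" where
  "binary_lists n = {xs. set xs \<subseteq> {0, 1} \<and> length xs = n}"

lemma finite_binary_lists: "finite (binary_lists n)"
  unfolding binary_lists_def by (rule finite_lists_length_eq) simp

lemma binary_lists_0: "binary_lists 0 = {[]}"
  by (auto simp: binary_lists_def)

lemma sum_binary_lists_Suc:
  fixes f :: "nat list \<Rightarrow> real"
  shows "(\<Sum>ys \<in> binary_lists (Suc n). f ys) = (\<Sum>z \<in> {0, 1}. \<Sum>zs \<in> binary_lists n. f (z # zs))"
proof -
  have img: "binary_lists (Suc n) = (\<lambda>(zs, z). z # zs) ` (binary_lists n \<times> {0, 1})"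
    unfolding binary_lists_def by (rule lists_length_Suc_eq)
  have inj: "inj_on (\<lambda>(zs, z). z # zs) (binary_lists n \<times> {0 :: nat, 1})"
    by (auto simp: inj_on_def)
  have "(\<Sum>ys \<in> binary_lists (Suc n). f ys) = (\<Sum>(zs, z) \<in> binary_lists n \<times> {0, 1}. f (z # zs))"
    unfolding img by (subst sum.reindex[OF inj]) (simp add: case_prod_beta)
  also have "\<dots> = (\<Sum>zs \<in> binary_lists n. \<Sum>z \<in> {0, 1}. f (z # zs))"
    by (rule sum.cartesian_product[symmetric])
  finally show ?thesis by (simp only: sum.swap[of _ "{0, 1}"])
qed

(* cond_mgf lam mu u m y = E[u^(Y_2 + ... + Y_(m+1)) | Y_1 = y] *)
definition cond_mgf :: "real \<Rightarrow> real \<Rightarrow> real \<Rightarrow> nat \<Rightarrow> nat \<Rightarrow> real" where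
  "cond_mgf lam \<mu> u m y = (\<Sum>zs \<in> binary_lists m. trans_prob lam \<mu> y zs * u ^ sum_list zs)"

lemma cond_mgf_0: "cond_mgf lam \<mu> u 0 y = 1"
  by (simp add: cond_mgf_def binary_lists_0)

lemma cond_mgf_Suc:
  "cond_mgf lam \<mu> u (Suc m) 0
     = (1 - \<mu> + lam * \<mu>) * cond_mgf lam \<mu> u m 0 + (1 - lam) * \<mu> * u * cond_mgf lam \<mu> u m 1"
  "cond_mgf lam \<mu> u (Suc m) 1
     = (1 - lam) * (1 - \<mu>) * cond_mgf lam \<mu> u m 0 + (\<mu> + lam * (1 - \<mu>)) * u * cond_mgf lam \<mu> u m 1"
  unfolding cond_mgf_def sum_binary_lists_Suc
  by (simp_all add: Mmat_def st_idx_def mu_vec_def mat_def sum_distrib_left algebra_simps)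

lemma mgf_eq_cond_mgf:
  "(\<Sum>ys \<in> binary_lists (Suc m). path_prob lam \<mu> ys * u ^ sum_list ys)
     = (1 - \<mu>) * cond_mgf lam \<mu> u m 0 + \<mu> * u * cond_mgf lam \<mu> u m 1"
  unfolding cond_mgf_def sum_binary_lists_Suc
  by (simp del: path_prob.simps add: path_prob_Cons mu_vec_def st_idx_def sum_distrib_left mult_ac)

(* D_t Pi^(1/2) applied to the vector (cond_mgf (exp t) k y)_y; this conjugation turns the tilted
   kernel M diag(1, e^t) into G_t. *)
definition sym_cond_mgf :: "real \<Rightarrow> real \<Rightarrow> real \<Rightarrow> nat \<Rightarrow> real^2" where
  "sym_cond_mgf lam \<mu> t k = vector [sqrt (1 - \<mu>) * cond_mgf lam \<mu> (exp t) k 0,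
                                   exp (t / 2) * sqrt \<mu> * cond_mgf lam \<mu> (exp t) k 1]"

lemma sym_cond_mgf_components:
  "sym_cond_mgf lam \<mu> t k $ 1 = sqrt (1 - \<mu>) * cond_mgf lam \<mu> (exp t) k 0"
  "sym_cond_mgf lam \<mu> t k $ 2 = exp (t / 2) * sqrt \<mu> * cond_mgf lam \<mu> (exp t) k 1"
  by (simp_all add: sym_cond_mgf_def)

lemma sym_cond_mgf_0: "sym_cond_mgf lam \<mu> t 0 = Dmat t *v gamma1 \<mu>"
  by (simp add: sym_cond_mgf_def Dmat_gamma1 cond_mgf_0)

lemma sqrt_exp_cancel:
  assumes "0 \<le> \<mu>" "\<mu> \<le> 1"
  shows "sqrt \<mu> * (sqrt \<mu> * x) = \<mu> * x" "sqrt (1 - \<mu>) * (sqrt (1 - \<mu>) * x) = (1 - \<mu>) * x"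
    "exp (t / 2) * (exp (t / 2) * x) = exp t * x" "exp (t / 2) * exp (t / 2) = exp t"
  using assms by (simp_all add: mult.assoc[symmetric] flip: exp_add)

lemma sym_cond_mgf_Suc:
  assumes "0 \<le> \<mu>" "\<mu> \<le> 1"
  shows "sym_cond_mgf lam \<mu> t (Suc k) = Gmat lam \<mu> t *v sym_cond_mgf lam \<mu> t k"
proof -
  note G = Gmat_entries[OF assms, of lam t]
  define F where "F = cond_mgf lam \<mu> (exp t)"
  have "(Gmat lam \<mu> t *v sym_cond_mgf lam \<mu> t k) $ 1
      = sqrt (1 - \<mu>) * ((1 - \<mu> + lam * \<mu>) * F k 0 + (1 - lam) * \<mu> * exp t * F k 1)"
    unfolding matrix_vector_mult_2 sym_cond_mgf_components G F_def
    by (simp add: algebra_simps sqrt_exp_cancel[OF assms])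
  moreover have "(Gmat lam \<mu> t *v sym_cond_mgf lam \<mu> t k) $ 2
      = exp (t / 2) * sqrt \<mu> * ((1 - lam) * (1 - \<mu>) * F k 0 + (\<mu> + lam * (1 - \<mu>)) * exp t * F k 1)"
    unfolding matrix_vector_mult_2 sym_cond_mgf_components G F_def
    by (simp add: algebra_simps sqrt_exp_cancel[OF assms])
  ultimately show ?thesis
    unfolding F_def cond_mgf_Suc[symmetric]
    by (simp add: vec_eq_iff forall_2 sym_cond_mgf_components)
qed

lemma mgf_eq_inner_sym_cond_mgf:
  assumes "0 \<le> \<mu>" "\<mu> \<le> 1"
  shows "(\<Sum>ys \<in> binary_lists (Suc m). path_prob lam \<mu> ys * exp t ^ sum_list ys)
    = (Dmat t *v gamma1 \<mu>) \<bullet> sym_cond_mgf lam \<mu> t m"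
  unfolding mgf_eq_cond_mgf Dmat_gamma1
  by (simp add: sym_cond_mgf_components inner_vec_def sum_2 algebra_simps sqrt_exp_cancel[OF assms])

lemma norm_Gmat_mult_le:
  assumes "0 \<le> \<mu>" "\<mu> \<le> 1" "lam \<le> 1" and "\<forall>i j. 0 \<le> Mmat lam \<mu> $ i $ j"
  shows "norm (Gmat lam \<mu> t *v v) \<le> theta lam \<mu> t * norm v"
proof -
  have "0 \<le> Mmat lam \<mu> $ st_idx 0 $ st_idx 0" "0 \<le> Mmat lam \<mu> $ st_idx 1 $ st_idx 1"
    using assms(4) by blast+
  then have "0 \<le> 1 - \<mu> + lam * \<mu> + (\<mu> + lam * (1 - \<mu>)) * exp t"
    unfolding Mmat_diag by simp
  moreover have "0 \<le> (1 - lam) * sqrt (1 - \<mu>) * sqrt \<mu> * exp (t / 2)" using assms by simp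
  ultimately show ?thesis
    unfolding theta_def by (rule norm_sym2_mult_le[OF Gmat_entries[OF assms(1,2)]])
qed

lemma mgf_le_theta_power:
  assumes "0 \<le> \<mu>" "\<mu> \<le> 1" "lam \<le> 1" and "\<forall>i j. 0 \<le> Mmat lam \<mu> $ i $ j"
  shows "(\<Sum>ys \<in> binary_lists (Suc m). path_prob lam \<mu> ys * exp t ^ sum_list ys)
    \<le> (norm (Dmat t *v gamma1 \<mu>))\<^sup>2 * theta lam \<mu> t ^ m"
proof -
  define w where "w = Dmat t *v gamma1 \<mu>"
  note norm_G = norm_Gmat_mult_le[OF assms, of t]
  have theta_nonneg: "0 \<le> theta lam \<mu> t"
    using norm_G[of "axis 1 1"] by (simp add: order_trans[OF norm_ge_zero])
  have norm_V: "norm (sym_cond_mgf lam \<mu> t k) \<le> theta lam \<mu> t ^ k * norm w" for k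
  proof (induction k)
    case 0
    then show ?case by (simp add: sym_cond_mgf_0 w_def)
  next
    case (Suc k)
    have "norm (sym_cond_mgf lam \<mu> t (Suc k)) \<le> theta lam \<mu> t * norm (sym_cond_mgf lam \<mu> t k)"
      unfolding sym_cond_mgf_Suc[OF assms(1,2)] by (rule norm_G)
    also have "\<dots> \<le> theta lam \<mu> t * (theta lam \<mu> t ^ k * norm w)"
      using Suc theta_nonneg by (rule mult_left_mono)
    finally show ?case by simp
  qed
  have "(\<Sum>ys \<in> binary_lists (Suc m). path_prob lam \<mu> ys * exp t ^ sum_list ys)
      = w \<bullet> sym_cond_mgf lam \<mu> t m"
    unfolding w_def by (rule mgf_eq_inner_sym_cond_mgf[OF assms(1,2)])
  also have "\<dots> \<le> norm w * norm (sym_cond_mgf lam \<mu> t m)" by (rule norm_cauchy_schwarz)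
  also have "\<dots> \<le> norm w * (theta lam \<mu> t ^ m * norm w)" by (rule mult_left_mono[OF norm_V]) simp
  finally show ?thesis unfolding w_def by (simp add: power2_eq_square mult_ac)
qed

lemma prob_Sn_ge_le_mgf:
  assumes "0 \<le> t" and "\<And>ys. 0 \<le> path_prob lam \<mu> ys"
  shows "prob_Sn_ge lam \<mu> n c
    \<le> exp (- (t * c)) * (\<Sum>ys \<in> binary_lists n. path_prob lam \<mu> ys * exp t ^ sum_list ys)"
proof -
  let ?S = "{ys. length ys = n \<and> set ys \<subseteq> {0, 1} \<and> c \<le> real (sum_list ys)}"
  have weight: "exp (t * (real (sum_list ys) - c)) = exp (- (t * c)) * exp t ^ sum_list ys" for ys
    by (simp add: algebra_simps exp_diff exp_of_nat_mult[symmetric] flip: exp_add)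
  have "prob_Sn_ge lam \<mu> n c = (\<Sum>ys \<in> ?S. path_prob lam \<mu> ys)" unfolding prob_Sn_ge_def ..
  also have "\<dots> \<le> (\<Sum>ys \<in> ?S. path_prob lam \<mu> ys * exp (t * (real (sum_list ys) - c)))"
  proof (rule sum_mono)
    fix ys assume "ys \<in> ?S"
    then have "1 \<le> exp (t * (real (sum_list ys) - c))" using assms(1) by simp
    then show "path_prob lam \<mu> ys \<le> path_prob lam \<mu> ys * exp (t * (real (sum_list ys) - c))"
      using assms(2)[of ys] by (simp add: mult_le_cancel_left1)
  qed
  also have "\<dots> \<le> (\<Sum>ys \<in> binary_lists n. path_prob lam \<mu> ys * exp (t * (real (sum_list ys) - c)))"
    by (rule sum_mono2[OF finite_binary_lists]) (auto simp: binary_lists_def assms(2))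
  finally show ?thesis unfolding weight by (simp add: sum_distrib_left mult_ac)
qed

lemma chernoff_bound:
  assumes "0 \<le> \<mu>" "\<mu> \<le> 1" "lam \<le> 1" "\<forall>i j. 0 \<le> Mmat lam \<mu> $ i $ j" "0 \<le> t"
  shows "prob_Sn_ge lam \<mu> (Suc m) c
    \<le> (norm (Dmat t *v gamma1 \<mu>))\<^sup>2 * theta lam \<mu> t ^ m * exp (- (t * c))"
proof -
  have "prob_Sn_ge lam \<mu> (Suc m) c
      \<le> exp (- (t * c)) * (\<Sum>ys \<in> binary_lists (Suc m). path_prob lam \<mu> ys * exp t ^ sum_list ys)"
    by (rule prob_Sn_ge_le_mgf) (use assms path_prob_nonneg in auto)
  also have "\<dots> \<le> exp (- (t * c)) * ((norm (Dmat t *v gamma1 \<mu>))\<^sup>2 * theta lam \<mu> t ^ m)"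
    using mgf_le_theta_power[OF assms(1-4)] by (rule mult_left_mono) simp
  finally show ?thesis by (simp add: mult_ac)
qed

lemma norm_Dmat_gamma1_le_theta:
  assumes "0 \<le> \<mu>" "\<mu> \<le> 1" "0 \<le> lam" "0 \<le> t"
  shows "(norm (Dmat t *v gamma1 \<mu>))\<^sup>2 \<le> theta lam \<mu> t"
proof -
  define h where "h = 1 - \<mu> + \<mu> * exp t"
  have "0 \<le> \<mu> * (exp t - 1)" "0 \<le> (1 - \<mu>) * (exp t - 1)" using assms by simp_all
  moreover have "h = 1 + \<mu> * (exp t - 1)" "exp t - h = (1 - \<mu>) * (exp t - 1)"
    unfolding h_def by (simp_all add: algebra_simps)
  ultimately have "1 \<le> h" "h \<le> exp t" by linarith+
  then have "lam * ((h - 1) * (h - exp t)) \<le> 0"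
    using assms(3) by (simp add: mult_nonneg_nonpos)
  moreover have "h\<^sup>2 - (1 - \<mu> + lam * \<mu> + (\<mu> + lam * (1 - \<mu>)) * exp t) * h + lam * exp t
      = lam * ((h - 1) * (h - exp t))"
    unfolding h_def by (simp add: power2_eq_square algebra_simps)
  ultimately show ?thesis
    unfolding norm_Dmat_gamma1[OF assms(1,2)] theta_eq_larger_root[OF assms(1,2)] h_def[symmetric]
    by (intro larger_root_ge) simp
qed

lemma prob_Sn_ge_le_exp_theta:
  assumes "0 \<le> \<mu>" "\<mu> \<le> 1" "-1 < lam" "lam \<le> 1" and M: "\<forall>i j. 0 \<le> Mmat lam \<mu> $ i $ j"
    and "0 \<le> t" "1 \<le> n"
  shows "prob_Sn_ge lam \<mu> n (real n * a)
    \<le> (norm (Dmat t *v gamma1 \<mu>))\<^sup>2 / theta lam \<mu> t * exp (- real n * (t * a - ln (theta lam \<mu> t)))"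
proof -
  obtain m where n: "n = Suc m" using assms(7) by (cases n) auto
  have "0 \<le> Mmat lam \<mu> $ st_idx 1 $ st_idx 1" using M by blast
  then have \<theta>: "0 < theta lam \<mu> t"
    using theta_pos[OF assms(1-3) _ assms(6)] unfolding Mmat_diag by simp
  have "- real n * (t * a - ln (theta lam \<mu> t)) = real n * ln (theta lam \<mu> t) + - (t * (real n * a))"
    by (simp add: algebra_simps)
  then have "exp (- real n * (t * a - ln (theta lam \<mu> t))) = theta lam \<mu> t ^ n * exp (- (t * (real n * a)))"
    using \<theta> by (simp only: exp_add exp_of_nat_mult exp_ln)
  then have "(norm (Dmat t *v gamma1 \<mu>))\<^sup>2 / theta lam \<mu> t * exp (- real n * (t * a - ln (theta lam \<mu> t)))
      = (norm (Dmat t *v gamma1 \<mu>))\<^sup>2 * theta lam \<mu> t ^ m * exp (- (t * (real n * a)))"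
    using \<theta> unfolding n by simp
  then show ?thesis unfolding n using chernoff_bound[OF assms(1,2,4,5,6)] by simp
qed

section \<open>A Hoeffding-type bound on theta\<close>

(* Hoeffding's lemma for the law with masses p and q at -1 and 1. *)
lemma two_point_hoeffding:
  fixes p q x :: real
  assumes "0 \<le> p" "0 \<le> q" "0 < p + q" "0 \<le> x"
  shows "p * exp (- x) + q * exp x \<le> (p + q) * exp ((q - p) / (p + q) * x + x\<^sup>2 / 2)"
proof -
  define \<pi> where "\<pi> = q / (p + q)"
  have \<pi>: "0 \<le> \<pi>" unfolding \<pi>_def using assms by simp
  have pos: "0 < 1 + \<pi> * (exp (2 * x) - 1)" using \<pi> assms(4) by (intro add_pos_nonneg) auto
  have "ln (1 + \<pi> * (exp (2 * x) - 1)) \<le> 2 * x * \<pi> + x\<^sup>2 / 2"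
    using Hoeffdings_lemma_aux[of "2 * x" \<pi>] \<pi> assms(4) by (simp add: power2_eq_square)
  then have "1 + \<pi> * (exp (2 * x) - 1) \<le> exp (2 * x * \<pi> + x\<^sup>2 / 2)"
    using pos by (metis exp_le_cancel_iff exp_ln)
  have exponent: "- x + (2 * x * \<pi> + x\<^sup>2 / 2) = (q - p) / (p + q) * x + x\<^sup>2 / 2"
    using assms(3) unfolding \<pi>_def by (simp add: field_simps)
  have "p * exp (- x) + q * exp x = (p + q) * exp (- x) * (1 + \<pi> * (exp (2 * x) - 1))"
    using assms(3) unfolding \<pi>_def by (simp add: field_simps flip: exp_add)
  also have "\<dots> \<le> (p + q) * exp (- x) * exp (2 * x * \<pi> + x\<^sup>2 / 2)"
    using \<open>1 + \<pi> * (exp (2 * x) - 1) \<le> _\<close> assms(3) by (intro mult_left_mono) auto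
  also have "\<dots> = (p + q) * exp (- x + (2 * x * \<pi> + x\<^sup>2 / 2))"
    by (simp only: exp_add mult.assoc)
  finally show ?thesis unfolding exponent .
qed

lemma exp_jensen_two_point:
  fixes lam m :: real
  assumes "0 \<le> lam"
  shows "(1 + lam) * exp ((1 - lam) / (1 + lam) * m) \<le> exp m + lam * exp (- m)"
proof -
  define \<tau> where "\<tau> = lam / (1 + lam)"
  have "0 < 1 + lam" using assms by simp
  then have weights: "(1 + lam) * (1 - \<tau>) = 1" "(1 + lam) * \<tau> = lam"
    and contraction: "1 - 2 * \<tau> = (1 - lam) / (1 + lam)"
    unfolding \<tau>_def by (simp_all add: field_simps)
  have mean: "(1 - \<tau>) * m + \<tau> * (- m) = (1 - lam) / (1 + lam) * m"
    unfolding contraction[symmetric] by (simp add: algebra_simps)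
  have "0 \<le> \<tau>" "\<tau> \<le> 1" unfolding \<tau>_def using assms by auto
  then have "exp ((1 - lam) / (1 + lam) * m) \<le> (1 - \<tau>) * exp m + \<tau> * exp (- m)"
    using convex_onD[OF exp_convex, of \<tau> m "- m"] unfolding mean[symmetric] by simp
  then have "(1 + lam) * exp ((1 - lam) / (1 + lam) * m) \<le> (1 + lam) * ((1 - \<tau>) * exp m + \<tau> * exp (- m))"
    using assms by (intro mult_left_mono) auto
  also have "\<dots> = exp m + lam * exp (- m)"
    by (simp only: distrib_left mult.assoc[symmetric] weights mult_1_left)
  finally show ?thesis .
qed

lemma larger_root_le_exp:
  fixes p q lam x m :: real
  assumes "p * exp (- x) + q * exp x \<le> exp m + lam * exp (- m)" and "lam \<le> exp (2 * m)"
  shows "larger_root (p + q * exp (2 * x)) (lam * exp (2 * x)) \<le> exp (m + x)"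
proof (rule larger_root_le)
  have "(exp (m + x))\<^sup>2 - (p + q * exp (2 * x)) * exp (m + x) + lam * exp (2 * x)
      = exp (m + 2 * x) * (exp m + lam * exp (- m) - (p * exp (- x) + q * exp x))"
    by (simp add: power2_eq_square algebra_simps flip: exp_add)
  then show "0 \<le> (exp (m + x))\<^sup>2 - (p + q * exp (2 * x)) * exp (m + x) + lam * exp (2 * x)"
    using assms(1) by simp
  have "lam * exp (- m) \<le> exp m"
    using mult_right_mono[OF assms(2), of "exp (- m)"] by (simp flip: exp_add)
  then have "p * exp (- x) + q * exp x \<le> 2 * exp m" using assms(1) by simp
  from mult_right_mono[OF this, of "exp x"]
  have "(p * exp (- x) + q * exp x) * exp x \<le> 2 * exp m * exp x" by simp
  moreover have "(p * exp (- x) + q * exp x) * exp x = p + q * exp (2 * x)"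
    by (simp add: algebra_simps flip: exp_add)
  ultimately show "p + q * exp (2 * x) \<le> 2 * exp (m + x)" by (simp add: exp_add)
qed

lemma theta_le_exp:
  fixes lam \<mu> x :: real
  assumes "0 < \<mu>" "\<mu> < 1" "0 \<le> lam" "lam < 1" "0 \<le> x"
  defines "c \<equiv> (1 - lam) / (1 + lam)"
  defines "m \<equiv> x\<^sup>2 / (2 * c) + (2 * \<mu> - 1) * x"
  shows "theta lam \<mu> (2 * x) \<le> exp (m + x)"
proof -
  define p q where "p = 1 - \<mu> + lam * \<mu>" and "q = \<mu> + lam * (1 - \<mu>)"
  have c: "0 < c" "c \<le> 1 - lam"
    unfolding c_def using assms(3,4) mult_left_le[of lam lam] by (auto simp: field_simps)
  have "0 \<le> lam * \<mu>" "0 \<le> lam * (1 - \<mu>)" using assms(1-4) by simp_all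
  then have pq: "0 \<le> p" "0 \<le> q" "p + q = 1 + lam"
    unfolding p_def q_def using assms(1,2) by (linarith, linarith, simp add: algebra_simps)
  have "q - p = (1 - lam) * (2 * \<mu> - 1)" unfolding p_def q_def by (simp add: algebra_simps)
  then have drift: "(q - p) / (p + q) = c * (2 * \<mu> - 1)" unfolding pq(3) c_def by simp
  have "c * m = (q - p) / (p + q) * x + x\<^sup>2 / 2"
    unfolding drift m_def using c by (simp add: field_simps power2_eq_square)
  then have "p * exp (- x) + q * exp x \<le> (1 + lam) * exp ((1 - lam) / (1 + lam) * m)"
    using two_point_hoeffding[of p q x] pq assms(3,5) unfolding c_def by simp
  also have "\<dots> \<le> exp m + lam * exp (- m)" by (rule exp_jensen_two_point[OF assms(3)])
  finally have mgf: "p * exp (- x) + q * exp x \<le> exp m + lam * exp (- m)" .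
  have "(2 * \<mu> - 1)\<^sup>2 \<le> 1"
    using assms(1,2) by (simp add: power2_eq_square algebra_simps mult_le_cancel_left1)
  then have "- c \<le> - c * (2 * \<mu> - 1)\<^sup>2" using c(1) by simp
  also have "\<dots> \<le> (x + c * (2 * \<mu> - 1))\<^sup>2 / c - c * (2 * \<mu> - 1)\<^sup>2" using c(1) by simp
  also have "\<dots> = 2 * m" unfolding m_def using c(1) by (simp add: field_simps power2_eq_square)
  finally have "lam - 1 \<le> 2 * m" using c(2) by linarith
  then have "lam \<le> exp (2 * m)"
    using exp_ge_add_one_self[of "lam - 1"] exp_le_cancel_iff[of "lam - 1" "2 * m"] by linarith
  then show ?thesis
    using larger_root_le_exp[OF mgf]
    unfolding theta_eq_larger_root[OF less_imp_le[OF assms(1)] less_imp_le[OF assms(2)]] p_def q_def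
    by simp
qed

section \<open>The explicit rate\<close>

(* The hypotheses say that at u = beta / alpha the two roots are beta and lam / alpha and that
   u -> alpha^a beta^(1-a) u^a touches the larger root there. *)
lemma larger_root_ge_tangent:
  fixes p q lam a \<alpha> \<beta> u :: real
  assumes "0 < \<alpha>" "0 < \<beta>" "0 \<le> a" "a \<le> 1" "0 \<le> lam" "0 < u"
    and tangent1: "(1 - a) * \<beta> + a * (lam / \<alpha>) = p"
    and tangent2: "a * \<beta> + (1 - a) * (lam / \<alpha>) = q * (\<beta> / \<alpha>)"
  shows "\<alpha> powr a * \<beta> powr (1 - a) * u powr a \<le> larger_root (p + q * u) (lam * u)"
proof -
  define y where "y = u * \<alpha> / \<beta>"
  have y: "0 < y" unfolding y_def using assms by simp
  define c where "c = \<beta> * y powr a"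
  have c: "0 < c" unfolding c_def using assms y by simp
  have c_eq: "c = \<alpha> powr a * \<beta> powr (1 - a) * u powr a"
    unfolding c_def y_def using assms
    by (simp add: powr_divide powr_mult powr_diff field_simps)
  have young: "y powr a \<le> a * y + (1 - a)" "y powr (1 - a) \<le> (1 - a) * y + a"
    using Youngs_inequality_0[of a "1 - a" y 1] Youngs_inequality_0[of "1 - a" a y 1] y assms(3,4)
    by simp_all
  have "c + lam * u / c = \<beta> * y powr a + lam / \<alpha> * y powr (1 - a)"
    unfolding c_def y_def using assms by (simp add: powr_diff field_simps)
  also have "\<dots> \<le> \<beta> * (a * y + (1 - a)) + lam / \<alpha> * ((1 - a) * y + a)"
    using assms by (intro add_mono mult_left_mono young) auto
  also have "\<dots> = y * (a * \<beta> + (1 - a) * (lam / \<alpha>)) + ((1 - a) * \<beta> + a * (lam / \<alpha>))"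
    using assms(1) by (simp add: field_simps)
  also have "\<dots> = p + q * u"
    unfolding tangent1 tangent2 y_def using assms by (simp add: field_simps)
  finally have "c\<^sup>2 - (p + q * u) * c + lam * u \<le> 0"
    using c by (simp add: power2_eq_square field_simps)
  then have "c \<le> larger_root (p + q * u) (lam * u)" by (rule larger_root_ge)
  then show ?thesis unfolding c_eq .
qed

lemma larger_root_at_tangent_le:
  fixes p q lam a \<alpha> \<beta> :: real
  assumes "0 < \<alpha>" "lam \<le> \<alpha> * \<beta>"
    and tangent1: "(1 - a) * \<beta> + a * (lam / \<alpha>) = p"
    and tangent2: "a * \<beta> + (1 - a) * (lam / \<alpha>) = q * (\<beta> / \<alpha>)"
  shows "larger_root (p + q * (\<beta> / \<alpha>)) (lam * (\<beta> / \<alpha>)) \<le> \<beta>"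
proof (rule larger_root_le)
  have "(1 - a) * \<beta> + a * L + (a * \<beta> + (1 - a) * L) = \<beta> + L" for L :: real
    by (simp add: algebra_simps)
  then have sum: "p + q * (\<beta> / \<alpha>) = \<beta> + lam / \<alpha>"
    unfolding tangent1[symmetric] tangent2[symmetric] .
  then show "0 \<le> \<beta>\<^sup>2 - (p + q * (\<beta> / \<alpha>)) * \<beta> + lam * (\<beta> / \<alpha>)"
    by (simp add: power2_eq_square algebra_simps)
  have "lam / \<alpha> \<le> \<beta>" using assms(1,2) by (simp add: divide_le_eq mult.commute)
  then show "p + q * (\<beta> / \<alpha>) \<le> 2 * \<beta>" unfolding sum by simp
qed

lemma tangent_denominators:
  fixes p q lam a R :: real
  assumes "0 < a" "a < 1" "2 \<le> R"
    and rel: "(p * q - lam) * (R\<^sup>2 - 2 * R) = 4 * lam * a * (1 - a)"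
  defines "X \<equiv> 1 - 2 * (1 - a) / R" and "Y \<equiv> 1 - 2 * a / R"
  shows "0 < X" "0 < Y" "X + Y \<le> 2" "lam * (X * Y) = p * q * (X + Y - 1)"
    and "(1 - a) + a * (X + Y - 1) = Y" "a + (1 - a) * (X + Y - 1) = X"
proof -
  have R: "0 < R" using assms(3) by simp
  show "0 < X" "0 < Y" "X + Y \<le> 2" unfolding X_def Y_def using assms(1-3) by (simp_all add: field_simps)
  have XY: "X * Y * R\<^sup>2 = R\<^sup>2 - 2 * R + 4 * a * (1 - a)"
    and X_Y: "(X + Y - 1) * R\<^sup>2 = R\<^sup>2 - 2 * R"
    unfolding X_def Y_def using R by (simp_all add: field_simps power2_eq_square)
  have "lam * (X * Y) * R\<^sup>2 = lam * (R\<^sup>2 - 2 * R + 4 * a * (1 - a))"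
    using XY by (simp add: mult.assoc)
  also have "\<dots> = p * q * (R\<^sup>2 - 2 * R)" using rel by (simp add: algebra_simps)
  also have "\<dots> = p * q * (X + Y - 1) * R\<^sup>2" using X_Y by (simp add: mult.assoc)
  finally show "lam * (X * Y) = p * q * (X + Y - 1)" using R by simp
  have lin: "a * X - (1 - a) * Y = 2 * a - 1"
    unfolding X_def Y_def using R by (simp add: field_simps)
  have "(1 - a) + a * (X + Y - 1) - Y = (a * X - (1 - a) * Y) - (2 * a - 1)"
    and "a + (1 - a) * (X + Y - 1) - X = (2 * a - 1) - (a * X - (1 - a) * Y)"
    by (simp_all add: algebra_simps)
  then show "(1 - a) + a * (X + Y - 1) = Y" "a + (1 - a) * (X + Y - 1) = X"
    unfolding lin by simp_all
qed

lemma tangent_point: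
  fixes p q lam a R :: real
  assumes "0 < p" "0 < q" "0 < a" "a < 1" "2 \<le> R"
    and rel: "(p * q - lam) * (R\<^sup>2 - 2 * R) = 4 * lam * a * (1 - a)"
  defines "\<alpha> \<equiv> q / (1 - 2 * (1 - a) / R)" and "\<beta> \<equiv> p / (1 - 2 * a / R)"
  shows "0 < \<alpha>" "0 < \<beta>" "lam \<le> \<alpha> * \<beta>"
    and "(1 - a) * \<beta> + a * (lam / \<alpha>) = p"
    and "a * \<beta> + (1 - a) * (lam / \<alpha>) = q * (\<beta> / \<alpha>)"
proof -
  define X Y where "X = 1 - 2 * (1 - a) / R" and "Y = 1 - 2 * a / R"
  note den = tangent_denominators[OF assms(3-5) rel, folded X_def Y_def]
  have \<alpha>: "\<alpha> = q / X" and \<beta>: "\<beta> = p / Y" unfolding \<alpha>_def \<beta>_def X_def Y_def by simp_all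
  show "0 < \<alpha>" "0 < \<beta>" unfolding \<alpha> \<beta> using den(1,2) assms(1,2) by simp_all
  have "lam * (X * Y) \<le> p * q"
    unfolding den(4) using den(3) assms(1,2) by (simp add: mult_le_cancel_left1)
  then show "lam \<le> \<alpha> * \<beta>" unfolding \<alpha> \<beta> using den(1,2) by (simp add: field_simps)
  have "(1 - a) * \<beta> + a * (lam / \<alpha>) = ((1 - a) * (p * q) + a * (lam * (X * Y))) / (q * Y)"
    unfolding \<alpha> \<beta> using den(1,2) assms(2) by (simp add: field_simps)
  also have "\<dots> = p * q * ((1 - a) + a * (X + Y - 1)) / (q * Y)"
    unfolding den(4) by (simp add: algebra_simps)
  also have "\<dots> = p" unfolding den(5) using den(2) assms(2) by simp
  finally show "(1 - a) * \<beta> + a * (lam / \<alpha>) = p" .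
  have "a * \<beta> + (1 - a) * (lam / \<alpha>) = (a * (p * q) + (1 - a) * (lam * (X * Y))) / (q * Y)"
    unfolding \<alpha> \<beta> using den(1,2) assms(2) by (simp add: field_simps)
  also have "\<dots> = p * q * (a + (1 - a) * (X + Y - 1)) / (q * Y)"
    unfolding den(4) by (simp add: algebra_simps)
  also have "\<dots> = q * (\<beta> / \<alpha>)" unfolding den(6) \<alpha> \<beta> using den(1,2) assms(2) by (simp add: field_simps)
  finally show "a * \<beta> + (1 - a) * (lam / \<alpha>) = q * (\<beta> / \<alpha>)" .
qed

definition rate_Delta :: "real \<Rightarrow> real \<Rightarrow> real \<Rightarrow> real" where
  "rate_Delta lam \<mu> a = 1 + 4 * lam * a * (1 - a) / (\<mu> * (1 - \<mu>) * (1 - lam)\<^sup>2)"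

(* For a = mu + eps the bound B of the theorem is (rate_alpha^a rate_beta^(1-a))^n; rate_beta is
   theta at the optimal tilt t* = ln (rate_beta / rate_alpha). *)
definition rate_alpha :: "real \<Rightarrow> real \<Rightarrow> real \<Rightarrow> real" where
  "rate_alpha lam \<mu> a = (\<mu> + lam * (1 - \<mu>)) / (1 - 2 * (1 - a) / (sqrt (rate_Delta lam \<mu> a) + 1))"

definition rate_beta :: "real \<Rightarrow> real \<Rightarrow> real \<Rightarrow> real" where
  "rate_beta lam \<mu> a = (1 - \<mu> + lam * \<mu>) / (1 - 2 * a / (sqrt (rate_Delta lam \<mu> a) + 1))"

lemma rate_Delta_ge_1:
  assumes "0 < \<mu>" "\<mu> < 1" "0 \<le> lam" "lam < 1" "0 \<le> a" "a \<le> 1"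
  shows "1 \<le> rate_Delta lam \<mu> a"
  unfolding rate_Delta_def using assms by simp

lemma rate_Delta_relation:
  assumes "0 < \<mu>" "\<mu> < 1" "0 \<le> lam" "lam < 1" "0 \<le> a" "a \<le> 1"
  defines "R \<equiv> sqrt (rate_Delta lam \<mu> a) + 1"
  shows "2 \<le> R"
    and "((1 - \<mu> + lam * \<mu>) * (\<mu> + lam * (1 - \<mu>)) - lam) * (R\<^sup>2 - 2 * R) = 4 * lam * a * (1 - a)"
proof -
  have Delta: "1 \<le> rate_Delta lam \<mu> a" by (rule rate_Delta_ge_1[OF assms(1-6)])
  then show "2 \<le> R" unfolding R_def by simp
  have "R\<^sup>2 - 2 * R = rate_Delta lam \<mu> a - 1"
    unfolding R_def using Delta by (simp add: power2_eq_square algebra_simps)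
  then show "((1 - \<mu> + lam * \<mu>) * (\<mu> + lam * (1 - \<mu>)) - lam) * (R\<^sup>2 - 2 * R) = 4 * lam * a * (1 - a)"
    unfolding diag_product_minus_lam rate_Delta_def using assms(1-4) by simp
qed

lemma rate_tangent_point:
  assumes "0 < \<mu>" "\<mu> < 1" "0 \<le> lam" "lam < 1" "0 < a" "a < 1"
  defines "\<alpha> \<equiv> rate_alpha lam \<mu> a" and "\<beta> \<equiv> rate_beta lam \<mu> a"
  shows "0 < \<alpha>" "0 < \<beta>" "lam \<le> \<alpha> * \<beta>"
    and "(1 - a) * \<beta> + a * (lam / \<alpha>) = 1 - \<mu> + lam * \<mu>"
    and "a * \<beta> + (1 - a) * (lam / \<alpha>) = (\<mu> + lam * (1 - \<mu>)) * (\<beta> / \<alpha>)"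
proof -
  have "0 < lam * \<mu> + (1 - \<mu>)" "0 < lam * (1 - \<mu>) + \<mu>"
    using assms(1-4) by (simp_all add: add_nonneg_pos)
  then have "0 < 1 - \<mu> + lam * \<mu>" "0 < \<mu> + lam * (1 - \<mu>)" by (simp_all add: algebra_simps)
  note tangent = tangent_point[OF this assms(5,6) rate_Delta_relation[OF assms(1-4)]]
  show "0 < \<alpha>" "0 < \<beta>" "lam \<le> \<alpha> * \<beta>"
    "(1 - a) * \<beta> + a * (lam / \<alpha>) = 1 - \<mu> + lam * \<mu>"
    "a * \<beta> + (1 - a) * (lam / \<alpha>) = (\<mu> + lam * (1 - \<mu>)) * (\<beta> / \<alpha>)"
    using tangent assms(5,6) unfolding \<alpha>_def \<beta>_def rate_alpha_def rate_beta_def by simp_all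
qed

lemma rate_Delta_self:
  assumes "0 < \<mu>" "\<mu> < 1" "lam < 1"
  shows "rate_Delta lam \<mu> \<mu> = ((1 + lam) / (1 - lam))\<^sup>2"
proof -
  have nz: "\<mu> \<noteq> 0" "1 - \<mu> \<noteq> 0" "1 - lam \<noteq> 0" using assms by simp_all
  have "(1 + lam)\<^sup>2 = (1 - lam)\<^sup>2 + 4 * lam" by (simp add: power2_eq_square algebra_simps)
  then have "((1 + lam) / (1 - lam))\<^sup>2 = 1 + 4 * lam / (1 - lam)\<^sup>2"
    unfolding power_divide using nz by (simp add: add_divide_distrib)
  also have "4 * lam / (1 - lam)\<^sup>2 = 4 * lam * \<mu> * (1 - \<mu>) / (\<mu> * (1 - \<mu>) * (1 - lam)\<^sup>2)"
    using nz by (simp add: field_simps)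
  finally show ?thesis unfolding rate_Delta_def by simp
qed

lemma rate_Delta_mono:
  assumes "0 \<le> \<mu>" "\<mu> \<le> 1" "0 \<le> lam" and "a * (1 - a) \<le> b * (1 - b)"
  shows "rate_Delta lam \<mu> a \<le> rate_Delta lam \<mu> b"
proof -
  have "4 * lam * (a * (1 - a)) \<le> 4 * lam * (b * (1 - b))"
    using assms(3,4) by (simp add: mult_left_mono)
  then show ?thesis
    unfolding rate_Delta_def using assms(1-3) by (simp add: divide_right_mono mult.assoc)
qed

lemma sqrt_rate_Delta_compare:
  assumes "0 < \<mu>" "\<mu> < a" "a < 1" "0 \<le> lam" "lam < 1" and "\<not> (\<mu> \<le> 1 / 2 \<and> 1 / 2 \<le> a)"
  shows "(2 * \<mu> - 1) * sqrt (rate_Delta lam \<mu> a) \<le> (2 * \<mu> - 1) * ((1 + lam) / (1 - lam))"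
proof -
  have \<mu>: "0 \<le> \<mu>" "\<mu> \<le> 1" using assms by simp_all
  have s: "sqrt (rate_Delta lam \<mu> \<mu>) = (1 + lam) / (1 - lam)"
    using rate_Delta_self[of \<mu> lam] assms by simp
  have gap: "a * (1 - a) - \<mu> * (1 - \<mu>) = (a - \<mu>) * (1 - a - \<mu>)" by (simp add: algebra_simps)
  show ?thesis
  proof (cases "1 / 2 < \<mu>")
    case True
    then have "a * (1 - a) \<le> \<mu> * (1 - \<mu>)"
      using gap assms(2) mult_nonneg_nonpos[of "a - \<mu>" "1 - a - \<mu>"] by linarith
    then have "sqrt (rate_Delta lam \<mu> a) \<le> (1 + lam) / (1 - lam)"
      unfolding s[symmetric] using rate_Delta_mono[OF \<mu> assms(4)] by simp
    then show ?thesis using True by (intro mult_left_mono) auto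
  next
    case False
    with assms(6) have "a < 1 / 2" by linarith
    then have "\<mu> * (1 - \<mu>) \<le> a * (1 - a)"
      using gap assms(2) mult_nonneg_nonneg[of "a - \<mu>" "1 - a - \<mu>"] by linarith
    then have "(1 + lam) / (1 - lam) \<le> sqrt (rate_Delta lam \<mu> a)"
      unfolding s[symmetric] using rate_Delta_mono[OF \<mu> assms(4)] by simp
    then show ?thesis using False by (intro mult_left_mono_neg) auto
  qed
qed

lemma drift_sqrt_rate_Delta_le:
  assumes "0 < \<mu>" "\<mu> < a" "a < 1" "0 \<le> lam" "lam < 1"
  shows "(1 - lam) * (2 * \<mu> - 1) * sqrt (rate_Delta lam \<mu> a) \<le> (1 + lam) * (2 * a - 1)"
proof (cases "\<mu> \<le> 1 / 2 \<and> 1 / 2 \<le> a")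
  case True
  then have "(1 - lam) * (2 * \<mu> - 1) \<le> 0" using assms(5) by (simp add: mult_nonneg_nonpos)
  then have "(1 - lam) * (2 * \<mu> - 1) * sqrt (rate_Delta lam \<mu> a) \<le> 0"
    by (rule mult_nonpos_nonneg) (use rate_Delta_ge_1[of \<mu> lam a] assms in simp)
  also have "0 \<le> (1 + lam) * (2 * a - 1)" using True assms(4) by simp
  finally show ?thesis .
next
  case False
  have "(1 - lam) * ((2 * \<mu> - 1) * sqrt (rate_Delta lam \<mu> a))
      \<le> (1 - lam) * ((2 * \<mu> - 1) * ((1 + lam) / (1 - lam)))"
    using sqrt_rate_Delta_compare[OF assms False] by (rule mult_left_mono) (use assms(5) in simp)
  also have "\<dots> = (1 + lam) * (2 * \<mu> - 1)" using assms(5) by simp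
  also have "\<dots> \<le> (1 + lam) * (2 * a - 1)" using assms(2,4) by simp
  finally show ?thesis by (simp add: mult.assoc)
qed

(* The optimal tilt is nonnegative, as Markov's inequality requires. *)
lemma rate_ratio_ge_1:
  assumes "0 < \<mu>" "\<mu> < a" "a < 1" "0 \<le> lam" "lam < 1"
  shows "1 \<le> rate_beta lam \<mu> a / rate_alpha lam \<mu> a"
proof -
  define p q R where "p = 1 - \<mu> + lam * \<mu>" and "q = \<mu> + lam * (1 - \<mu>)"
    and "R = sqrt (rate_Delta lam \<mu> a) + 1"
  define X Y where "X = 1 - 2 * (1 - a) / R" and "Y = 1 - 2 * a / R"
  have "0 < \<mu>" "\<mu> < 1" "0 \<le> a" "a \<le> 1" "0 < a" using assms by simp_all
  note rel = rate_Delta_relation[OF this(1,2) assms(4,5) this(3,4), folded p_def q_def R_def]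
  note den = tangent_denominators[OF \<open>0 < a\<close> assms(3) rel, folded X_def Y_def]
  have \<alpha>: "rate_alpha lam \<mu> a = q / X" and \<beta>: "rate_beta lam \<mu> a = p / Y"
    unfolding rate_alpha_def rate_beta_def p_def q_def X_def Y_def R_def by simp_all
  have "0 < p" "0 < q" unfolding p_def q_def using assms by (simp_all add: add_pos_nonneg)
  have "p * X - q * Y = ((1 + lam) * (2 * a - 1) - (1 - lam) * (2 * \<mu> - 1) * (R - 1)) / R"
    unfolding p_def q_def X_def Y_def using rel(1) by (simp add: field_simps)
  also have "\<dots> \<ge> 0"
    using drift_sqrt_rate_Delta_le[OF assms] rel(1) unfolding R_def by simp
  finally show ?thesis
    unfolding \<alpha> \<beta> using den(1,2) \<open>0 < p\<close> \<open>0 < q\<close> by (simp add: field_simps)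
qed

lemma prob_Sn_ge_le_rate_power:
  assumes "0 < \<mu>" "\<mu> < a" "a < 1" "0 \<le> lam" "lam < 1"
    and M: "\<forall>i j. 0 \<le> Mmat lam \<mu> $ i $ j" and "1 \<le> n"
  shows "prob_Sn_ge lam \<mu> n (real n * a)
    \<le> (rate_alpha lam \<mu> a powr a * rate_beta lam \<mu> a powr (1 - a)) ^ n"
proof -
  obtain m where n: "n = Suc m" using assms(7) by (cases n) auto
  define \<alpha> \<beta> where "\<alpha> = rate_alpha lam \<mu> a" and "\<beta> = rate_beta lam \<mu> a"
  define t where "t = ln (\<beta> / \<alpha>)"
  have \<mu>: "0 \<le> \<mu>" "\<mu> \<le> 1" using assms(1-3) by simp_all
  note tangent = rate_tangent_point[OF assms(1) _ assms(4,5), of a, folded \<alpha>_def \<beta>_def]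
  have \<alpha>\<beta>: "0 < \<alpha>" "0 < \<beta>" using tangent assms by simp_all
  have t: "0 \<le> t" "exp t = \<beta> / \<alpha>"
    using rate_ratio_ge_1[OF assms(1-5)] \<alpha>\<beta> unfolding t_def \<alpha>_def[symmetric] \<beta>_def[symmetric] by simp_all
  have "0 < theta lam \<mu> t"
    by (intro theta_pos[OF \<mu> _ _ t(1)]) (use assms(1-5) in simp_all)
  moreover have "theta lam \<mu> t \<le> \<beta>"
    unfolding theta_eq_larger_root[OF \<mu>] t(2)
    by (rule larger_root_at_tangent_le) (use tangent assms in simp_all)
  ultimately have "theta lam \<mu> t ^ n \<le> \<beta> ^ n" by (simp add: power_mono)
  have "prob_Sn_ge lam \<mu> n (real n * a)
      \<le> (norm (Dmat t *v gamma1 \<mu>))\<^sup>2 * theta lam \<mu> t ^ m * exp (- (t * (real n * a)))"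
    unfolding n by (rule chernoff_bound) (use \<mu> assms(5) M t in simp_all)
  also have "\<dots> \<le> theta lam \<mu> t ^ n * exp (- (t * (real n * a)))"
    using norm_Dmat_gamma1_le_theta[OF \<mu> assms(4) t(1)] \<open>0 < theta lam \<mu> t\<close>
    unfolding n by (simp add: mult_right_mono)
  also have "\<dots> \<le> \<beta> ^ n * exp (- (t * (real n * a)))"
    using \<open>theta lam \<mu> t ^ n \<le> \<beta> ^ n\<close> by simp
  also have "\<dots> = (\<beta> * (\<beta> / \<alpha>) powr (- a)) ^ n"
    using \<alpha>\<beta> by (simp add: t_def power_mult_distrib powr_def exp_of_nat_mult[symmetric] mult_ac)
  also have "\<beta> * (\<beta> / \<alpha>) powr (- a) = \<alpha> powr a * \<beta> powr (1 - a)"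
    using \<alpha>\<beta> by (simp add: powr_divide powr_minus powr_diff field_simps)
  finally show ?thesis unfolding \<alpha>_def \<beta>_def .
qed

lemma rate_le_exp:
  assumes "0 < \<mu>" "0 \<le> lam" "lam < 1" "0 < \<epsilon>" "\<mu> + \<epsilon> < 1"
  shows "rate_alpha lam \<mu> (\<mu> + \<epsilon>) powr (\<mu> + \<epsilon>) * rate_beta lam \<mu> (\<mu> + \<epsilon>) powr (1 - (\<mu> + \<epsilon>))
    \<le> exp (- 2 * ((1 - lam) / (1 + lam)) * \<epsilon>\<^sup>2)"
proof -
  define a where "a = \<mu> + \<epsilon>"
  define C where "C = rate_alpha lam \<mu> a powr a * rate_beta lam \<mu> a powr (1 - a)"
  define c where "c = (1 - lam) / (1 + lam)"
  define x where "x = 2 * c * \<epsilon>"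
  define m where "m = x\<^sup>2 / (2 * c) + (2 * \<mu> - 1) * x"
  have \<mu>: "0 < \<mu>" "\<mu> < 1" and a: "0 < a" "a < 1" unfolding a_def using assms by simp_all
  have c: "0 < c" unfolding c_def using assms(2,3) by simp
  have x: "0 \<le> x" unfolding x_def using c assms(4) by simp
  note tangent = rate_tangent_point[OF \<mu> assms(2,3) a]
  \<comment> \<open>\<open>x = 2 c \<epsilon>\<close> minimises the exponent \<open>m + x - 2 a x\<close> reached below\<close>
  have "C * exp (2 * x) powr a \<le> theta lam \<mu> (2 * x)"
    unfolding C_def theta_eq_larger_root[OF less_imp_le[OF \<mu>(1)] less_imp_le[OF \<mu>(2)]]
    by (rule larger_root_ge_tangent) (use tangent a assms(2) in simp_all)
  also have "\<dots> \<le> exp (m + x)"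
    unfolding m_def c_def by (rule theta_le_exp[OF \<mu> assms(2,3) x])
  finally have "C \<le> exp (m + x - 2 * a * x)"
    by (simp add: powr_def exp_diff field_simps)
  also have "m + x - 2 * a * x = - 2 * c * \<epsilon>\<^sup>2"
    unfolding m_def x_def a_def using c by (simp add: field_simps power2_eq_square)
  finally show ?thesis unfolding C_def a_def c_def by simp
qed

lemma powr_real_mult_nat:
  fixes x b :: real
  assumes "0 < x"
  shows "x powr (real n * b) = (x powr b) ^ n"
  using assms by (simp add: powr_powr[symmetric] powr_realpow mult.commute)

lemma prob_Sn_ge_rate_bound:
  assumes "0 < \<mu>" "0 \<le> lam" "lam < 1" "\<forall>i j. 0 \<le> Mmat lam \<mu> $ i $ j"
    and "0 < \<epsilon>" "\<mu> + \<epsilon> < 1" "1 \<le> n"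
  defines "a \<equiv> \<mu> + \<epsilon>"
  defines "B \<equiv> rate_alpha lam \<mu> a powr (real n * a) * rate_beta lam \<mu> a powr (real n * (1 - a))"
  shows "prob_Sn_ge lam \<mu> n (real n * a) \<le> B"
    and "B \<le> exp (- 2 * ((1 - lam) / (1 + lam)) * real n * \<epsilon>\<^sup>2)"
proof -
  have "0 < rate_alpha lam \<mu> a" "0 < rate_beta lam \<mu> a"
    unfolding a_def using rate_tangent_point(1,2) assms by simp_all
  then have B: "B = (rate_alpha lam \<mu> a powr a * rate_beta lam \<mu> a powr (1 - a)) ^ n"
    unfolding B_def by (simp add: powr_real_mult_nat power_mult_distrib)
  show "prob_Sn_ge lam \<mu> n (real n * a) \<le> B"
    unfolding B a_def by (rule prob_Sn_ge_le_rate_power) (use assms in simp_all)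
  have "B \<le> exp (- 2 * ((1 - lam) / (1 + lam)) * \<epsilon>\<^sup>2) ^ n"
    unfolding B a_def by (rule power_mono[OF rate_le_exp]) (use assms in simp_all)
  then show "B \<le> exp (- 2 * ((1 - lam) / (1 + lam)) * real n * \<epsilon>\<^sup>2)"
    by (simp add: exp_of_nat_mult[symmetric] mult_ac)
qed

theorem proposition1:
  fixes \<mu> lam \<epsilon> t :: real and n :: nat
  assumes "0 < \<mu>" and "\<mu> < 1"
    and "-1 < lam" and "lam < 1"
    and "\<forall>i j. Mmat lam \<mu> $ i $ j \<ge> 0"
    and "\<epsilon> > 0" and "\<mu> + \<epsilon> < 1"
    and "n \<ge> 1" and "t \<ge> 0"
  shows "(prob_Sn_ge lam \<mu> n (real n * (\<mu> + \<epsilon>))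
           \<le> (norm (Dmat t *v gamma1 \<mu>))\<^sup>2 / theta lam \<mu> t
              * exp (- real n * (t * (\<mu> + \<epsilon>) - ln (theta lam \<mu> t))))
         \<and> (0 \<le> lam \<longrightarrow>
           (let \<mu>b = 1 - \<mu>;
                \<Delta> = 1 + 4 * lam * (\<mu> + \<epsilon>) * (\<mu>b - \<epsilon>) / (\<mu> * \<mu>b * (1 - lam)\<^sup>2);
                B = ((\<mu> + \<mu>b * lam) / (1 - 2 * (\<mu>b - \<epsilon>) / (sqrt \<Delta> + 1)))
                      powr (real n * (\<mu> + \<epsilon>))
                  * ((\<mu>b + \<mu> * lam) / (1 - 2 * (\<mu> + \<epsilon>) / (sqrt \<Delta> + 1)))
                      powr (real n * (\<mu>b - \<epsilon>))
            in prob_Sn_ge lam \<mu> n (real n * (\<mu> + \<epsilon>)) \<le> B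
               \<and> B \<le> exp (- 2 * ((1 - lam) / (1 + lam)) * real n * \<epsilon>\<^sup>2)))"
proof -
  define a where "a = \<mu> + \<epsilon>"
  have co_a: "1 - a = 1 - \<mu> - \<epsilon>" unfolding a_def by simp
  have alpha: "(\<mu> + (1 - \<mu>) * lam) / (1 - 2 * (1 - a)
      / (sqrt (1 + 4 * lam * a * (1 - a) / (\<mu> * (1 - \<mu>) * (1 - lam)\<^sup>2)) + 1)) = rate_alpha lam \<mu> a"
    and beta: "(1 - \<mu> + \<mu> * lam) / (1 - 2 * a
      / (sqrt (1 + 4 * lam * a * (1 - a) / (\<mu> * (1 - \<mu>) * (1 - lam)\<^sup>2)) + 1)) = rate_beta lam \<mu> a"
    unfolding rate_alpha_def rate_beta_def rate_Delta_def by (simp_all add: mult.commute)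
  have "prob_Sn_ge lam \<mu> n (real n * a)
      \<le> (norm (Dmat t *v gamma1 \<mu>))\<^sup>2 / theta lam \<mu> t * exp (- real n * (t * a - ln (theta lam \<mu> t)))"
    by (rule prob_Sn_ge_le_exp_theta) (use assms in simp_all)
  moreover note prob_Sn_ge_rate_bound[of \<mu> lam \<epsilon> n, folded a_def]
  ultimately show ?thesis
    using assms unfolding Let_def co_a[symmetric] a_def[symmetric] alpha beta by blast
qed

end
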